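(* Assume (H1)–(H4) and let $H$ be a defining function for $Y$. Let $u$ be an upper semicontinuous viscosity subsolution of $( * )$ on $X$, and suppose $\phi\in C^2$ is such that $u-\phi$ has a strict local maximum at $x\in X$. Then $$\max\{-g(\nabla\phi(x))\det(D^2\phi(x))+f(x),\;-\lambda_1(D^2\phi(x)),\;H(\nabla\phi(x))\}\le 0.$$
   Context: Standing hypotheses (H1)–(H4): (H1) $X,Y\subset\mathbb{R}^n$ are convex, bounded, open domains. (H2) $f\in L^1(X)$ is non-negative and lower semicontinuous. (H3) $g\in L^1(\mathbb{R}^n)$ is positive on $Y$, vanishes on $\mathbb{R}^n\setminus Y$, and is upper semicontinuous. (H4) $\int_X f\,dx=\int_Y g\,dy$. A defining function for $Y$ is a continuous $H:\mathbb{R}^n\to\mathbb{R}$ with $H<0$ on $Y$, $H=0$ on $\partial Y$, $H>0$ on $\mathbb{R}^n\setminus\bar Y$. $\lambda_1(A)$ is the smallest eigenvalue of a symmetric matrix $A$. Equation $( * )$: $\max\{-g(\nabla u)\det(D^2u)+f,-\lambda_1(D^2u),H(\nabla u)\}=0$ in $X$. With $F(x,p,A)=\max\{-g(p)\det A+f(x),-\lambda_1(A),H(p)\}$, an upper semicontinuous $u$ is a viscosity subsolution of $( * )$ if for every $\phi\in C^2$ and $x\in X$ at which $u-\phi$ has a local maximum, $F_*(x,\nabla\phi(x),D^2\phi(x))\le0$, $F_*$ the lower semicontinuous envelope of $F$. *)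

theory Defs
  imports "HOL-Analysis.Analysis"
begin

definition usc_on :: "'a::metric_space set \<Rightarrow> ('a \<Rightarrow> real) \<Rightarrow> bool" where
  "usc_on S u \<longleftrightarrow> (\<forall>x\<in>S. \<forall>c. u x < c \<longrightarrow> (\<exists>e>0. \<forall>y\<in>S. dist y x < e \<longrightarrow> u y < c))"

definition lsc_on :: "'a::metric_space set \<Rightarrow> ('a \<Rightarrow> real) \<Rightarrow> bool" where
  "lsc_on S u \<longleftrightarrow> (\<forall>x\<in>S. \<forall>c. c < u x \<longrightarrow> (\<exists>e>0. \<forall>y\<in>S. dist y x < e \<longrightarrow> c < u y))"

definition grad :: "(real^'n \<Rightarrow> real) \<Rightarrow> real^'n \<Rightarrow> real^'n" where
  "grad \<phi> x = (\<chi> i. frechet_derivative \<phi> (at x) (axis i 1))"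

definition hess :: "(real^'n \<Rightarrow> real) \<Rightarrow> real^'n \<Rightarrow> real^'n^'n" where
  "hess \<phi> x = (\<chi> i j. frechet_derivative (\<lambda>y. grad \<phi> y $ i) (at x) (axis j 1))"

definition C2 :: "(real^'n \<Rightarrow> real) \<Rightarrow> bool" where
  "C2 \<phi> \<longleftrightarrow> (\<forall>x. \<phi> differentiable (at x))
     \<and> (\<forall>i x. (\<lambda>y. grad \<phi> y $ i) differentiable (at x))
     \<and> continuous_on UNIV (hess \<phi>)"

definition symmetric_mat :: "real^'n^'n \<Rightarrow> bool" where
  "symmetric_mat A \<longleftrightarrow> transpose A = A"

definition lambda1 :: "real^'n^'n \<Rightarrow> real" where
  "lambda1 A = Min {l. \<exists>v. v \<noteq> 0 \<and> A *v v = l *\<^sub>R v}"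

definition defining_function :: "(real^'n) set \<Rightarrow> (real^'n \<Rightarrow> real) \<Rightarrow> bool" where
  "defining_function Y H \<longleftrightarrow> continuous_on UNIV H
     \<and> (\<forall>y\<in>Y. H y < 0) \<and> (\<forall>y\<in>frontier Y. H y = 0) \<and> (\<forall>y. y \<notin> closure Y \<longrightarrow> H y > 0)"

definition Fop :: "(real^'n \<Rightarrow> real) \<Rightarrow> (real^'n \<Rightarrow> real) \<Rightarrow> (real^'n \<Rightarrow> real)
    \<Rightarrow> real^'n \<Rightarrow> real^'n \<Rightarrow> real^'n^'n \<Rightarrow> real" where
  "Fop f g H x p A = max (max (- g p * det A + f x) (- lambda1 A)) (H p)"

definition Fop_lower :: "(real^'n \<Rightarrow> real) \<Rightarrow> (real^'n \<Rightarrow> real) \<Rightarrow> (real^'n \<Rightarrow> real)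
    \<Rightarrow> (real^'n) set \<Rightarrow> real^'n \<Rightarrow> real^'n \<Rightarrow> real^'n^'n \<Rightarrow> ereal" where
  "Fop_lower f g H X x p A =
     Liminf (inf (nhds (x, p, A)) (principal (X \<times> UNIV \<times> {B. symmetric_mat B})))
       (\<lambda>(y, q, B). ereal (Fop f g H y q B))"

definition local_max_at :: "'a::metric_space set \<Rightarrow> ('a \<Rightarrow> real) \<Rightarrow> 'a \<Rightarrow> bool" where
  "local_max_at S w x \<longleftrightarrow> x \<in> S \<and> (\<exists>e>0. \<forall>y\<in>S. dist y x < e \<longrightarrow> w y \<le> w x)"

definition strict_local_max_at :: "'a::metric_space set \<Rightarrow> ('a \<Rightarrow> real) \<Rightarrow> 'a \<Rightarrow> bool" where
  "strict_local_max_at S w x \<longleftrightarrow> x \<in> S \<and> (\<exists>e>0. \<forall>y\<in>S. dist y x < e \<longrightarrow> y \<noteq> x \<longrightarrow> w y < w x)"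

definition viscosity_subsolution :: "(real^'n \<Rightarrow> real) \<Rightarrow> (real^'n \<Rightarrow> real) \<Rightarrow> (real^'n \<Rightarrow> real)
    \<Rightarrow> (real^'n) set \<Rightarrow> (real^'n \<Rightarrow> real) \<Rightarrow> bool" where
  "viscosity_subsolution f g H X u \<longleftrightarrow> usc_on X u \<and>
     (\<forall>\<phi> x. C2 \<phi> \<longrightarrow> x \<in> X \<longrightarrow> local_max_at X (\<lambda>y. u y - \<phi> y) x \<longrightarrow>
        Fop_lower f g H X x (grad \<phi> x) (hess \<phi> x) \<le> 0)"

end

theory Submission
  imports Defs
begin

text \<open>
  A strict local maximum is a local maximum, so the subsolution property gives
  \<open>F\<^sub>*(x, \<nabla>\<phi>(x), D\<^sup>2\<phi>(x)) \<le> 0\<close>; it remains to see that \<open>F\<^sub>*\<close> agrees with \<open>F\<close> at this jet.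
  The lower envelope is \<open>+\<infinity>\<close> at non-symmetric matrices, and \<open>\<lambda>\<^sub>1\<close> is upper
  semicontinuous on symmetric matrices (it is the minimum of the Rayleigh quotient), so
  \<open>F\<^sub>* \<ge> -\<lambda>\<^sub>1\<close> and the Hessian is positive semidefinite, hence has nonnegative determinant.
  At such a matrix every term of \<open>F\<close> is lower semicontinuous: \<open>f\<close> is lsc, \<open>H\<close> is continuous,
  and \<open>g\<close> is usc and nonnegative, so \<open>p, B \<mapsto> g(p) det B\<close> is usc where \<open>det B \<ge> 0\<close>.
\<close>

lemma symmetric_mat_inner_commute:
  fixes B :: "real^'n^'n"
  assumes "symmetric_mat B"
  shows "w \<bullet> (B *v v) = v \<bullet> (B *v w)"
proof -
  have "w \<bullet> (B *v v) = (w v* B) \<bullet> v" by (simp add: dot_lmul_matrix)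
  also have "w v* B = transpose B *v w" by simp
  also have "\<dots> = B *v w" using assms by (simp add: symmetric_mat_def)
  finally show ?thesis by (simp add: inner_commute)
qed

lemma symmetric_mat_quadratic_form_add:
  fixes B :: "real^'n^'n"
  assumes "symmetric_mat B"
  shows "(v + t *\<^sub>R w) \<bullet> (B *v (v + t *\<^sub>R w))
    = v \<bullet> (B *v v) + 2 * t * (w \<bullet> (B *v v)) + t\<^sup>2 * (w \<bullet> (B *v w))"
proof -
  have "B *v (v + t *\<^sub>R w) = B *v v + t *\<^sub>R (B *v w)"
    by (simp add: matrix_vector_right_distrib matrix_vector_mult_scaleR)
  then show ?thesis using symmetric_mat_inner_commute[OF assms, of v w]
    by (simp add: inner_add_left inner_add_right power2_eq_square algebra_simps)
qed

lemma linear_coeff_eq_0_if_quadratic_nonneg: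
  fixes a b :: real
  assumes "\<And>t. 0 \<le> a * t + b * t\<^sup>2"
  shows "a = 0"
proof -
  define s where "s = 1 / (\<bar>b\<bar> + 1)"
  have s: "s > 0" "b * s < 1"
    unfolding s_def by (auto simp: field_simps abs_if)
  have "0 \<le> a * (- a * s) + b * (- a * s)\<^sup>2" by (rule assms)
  also have "\<dots> = a\<^sup>2 * s * (b * s - 1)" by (simp add: power2_eq_square algebra_simps)
  finally have "0 \<le> a\<^sup>2 * s * (b * s - 1)" .
  moreover have "a \<noteq> 0 \<Longrightarrow> a\<^sup>2 * s * (b * s - 1) < 0"
    using s by (simp add: mult_pos_neg)
  ultimately show ?thesis by linarith
qed

text \<open>A minimiser of the quadratic form on the unit sphere is an eigenvector: the first
  variation of the Rayleigh quotient in any direction \<open>r\<close> vanishes.\<close>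

lemma symmetric_mat_Rayleigh_minimizer:
  fixes B :: "real^'n^'n"
  assumes sB: "symmetric_mat B"
  obtains v \<mu> where "norm v = 1" "B *v v = \<mu> *\<^sub>R v" "\<And>w. \<mu> * (norm w)\<^sup>2 \<le> w \<bullet> (B *v w)"
proof -
  let ?q = "\<lambda>v. v \<bullet> (B *v v)"
  have "sphere (0::real^'n) 1 \<noteq> {}"
    by (metis norm_axis_1 mem_sphere_0 empty_iff)
  moreover have "continuous_on (sphere 0 1) ?q"
    by (intro continuous_intros)
  ultimately obtain v where v: "v \<in> sphere 0 1" and vmin: "\<And>y. y \<in> sphere 0 1 \<Longrightarrow> ?q v \<le> ?q y"
    using continuous_attains_inf[OF compact_sphere] by blast
  define \<mu> where "\<mu> = ?q v"
  have nv: "norm v = 1" using v by simp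
  have low: "\<mu> * (norm w)\<^sup>2 \<le> ?q w" for w
  proof (cases "w = 0")
    case False
    have "\<mu> \<le> ?q ((1 / norm w) *\<^sub>R w)" unfolding \<mu>_def using False by (intro vmin) simp
    also have "\<dots> = ?q w / (norm w)\<^sup>2"
      by (simp add: matrix_vector_mult_scaleR power2_eq_square)
    finally show ?thesis using False by (simp add: field_simps)
  qed simp
  have eig: "B *v v = \<mu> *\<^sub>R v"
  proof -
    define r where "r = B *v v - \<mu> *\<^sub>R v"
    have "0 \<le> (2 * (r \<bullet> (B *v v)) - 2 * \<mu> * (v \<bullet> r)) * t + (?q r - \<mu> * (norm r)\<^sup>2) * t\<^sup>2" for t
    proof -
      have "v \<bullet> v = 1" using nv by (metis norm_eq_1)
      then have "(norm (v + t *\<^sub>R r))\<^sup>2 = 1 + 2 * t * (v \<bullet> r) + t\<^sup>2 * (norm r)\<^sup>2"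
        unfolding power2_norm_eq_inner
        by (simp add: inner_add_left inner_add_right power2_eq_square algebra_simps inner_commute)
      moreover have "\<mu> * (norm (v + t *\<^sub>R r))\<^sup>2 \<le> ?q (v + t *\<^sub>R r)" by (rule low)
      ultimately show ?thesis
        using symmetric_mat_quadratic_form_add[OF sB, of v t r] by (simp add: \<mu>_def algebra_simps)
    qed
    from linear_coeff_eq_0_if_quadratic_nonneg[OF this]
    have "r \<bullet> (B *v v) - \<mu> * (v \<bullet> r) = 0" by simp
    then have "r \<bullet> r = 0" unfolding r_def
      by (simp add: inner_diff_left inner_diff_right inner_commute algebra_simps)
    then show ?thesis unfolding r_def by simp
  qed
  from nv eig low show ?thesis by (rule that)
qed

lemma symmetric_mat_eigenvectors_orthogonal:
  fixes B :: "real^'n^'n"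
  assumes "symmetric_mat B" "B *v v = l1 *\<^sub>R v" "B *v w = l2 *\<^sub>R w" "l1 \<noteq> l2"
  shows "v \<bullet> w = 0"
proof -
  have "w \<bullet> (B *v v) = v \<bullet> (B *v w)" by (rule symmetric_mat_inner_commute[OF assms(1)])
  then have "l1 * (v \<bullet> w) = l2 * (v \<bullet> w)" using assms by (simp add: inner_commute)
  then show ?thesis using assms(4) by simp
qed

lemma finite_eigenvalues_symmetric_mat:
  fixes B :: "real^'n^'n"
  assumes sB: "symmetric_mat B"
  shows "finite {l. \<exists>v. v \<noteq> 0 \<and> B *v v = l *\<^sub>R v}"
proof -
  define E where "E = {l. \<exists>v. v \<noteq> 0 \<and> B *v v = l *\<^sub>R v}"
  define ev where "ev l = (SOME v. v \<noteq> 0 \<and> B *v v = l *\<^sub>R v)" for l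
  have ev: "ev l \<noteq> 0 \<and> B *v ev l = l *\<^sub>R ev l" if "l \<in> E" for l
    using that unfolding E_def ev_def by (metis (mono_tags, lifting) mem_Collect_eq someI_ex)
  have inj: "inj_on ev E"
  proof (rule inj_onI)
    fix a b assume "a \<in> E" "b \<in> E" "ev a = ev b"
    then have "a *\<^sub>R ev a = b *\<^sub>R ev a" using ev by metis
    then show "a = b" using ev[OF \<open>a \<in> E\<close>] by (simp add: scaleR_cancel_right)
  qed
  have "pairwise orthogonal (ev ` E)"
    unfolding pairwise_def orthogonal_def
    by (metis (no_types, lifting) ev symmetric_mat_eigenvectors_orthogonal[OF sB] imageE)
  moreover have "0 \<notin> ev ` E" using ev by auto
  ultimately have "independent (ev ` E)" by (rule pairwise_orthogonal_independent)
  then have "finite (ev ` E)" using independent_bound by blast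
  then show ?thesis using finite_imageD[OF _ inj] unfolding E_def by blast
qed

lemma lambda1_Rayleigh:
  fixes B :: "real^'n^'n"
  assumes sB: "symmetric_mat B"
  shows lambda1_le_quadratic_form: "lambda1 B * (norm w)\<^sup>2 \<le> w \<bullet> (B *v w)"
    and lambda1_attained: "\<exists>v. norm v = 1 \<and> v \<bullet> (B *v v) = lambda1 B"
proof -
  obtain v \<mu> where v: "norm v = 1" "B *v v = \<mu> *\<^sub>R v"
    and low: "\<And>w. \<mu> * (norm w)\<^sup>2 \<le> w \<bullet> (B *v w)"
    using symmetric_mat_Rayleigh_minimizer[OF sB] by blast
  have "lambda1 B = \<mu>"
    unfolding lambda1_def
  proof (rule Min_eqI)
    show "finite {l. \<exists>v. v \<noteq> 0 \<and> B *v v = l *\<^sub>R v}" by (rule finite_eigenvalues_symmetric_mat[OF sB])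
    show "\<mu> \<in> {l. \<exists>v. v \<noteq> 0 \<and> B *v v = l *\<^sub>R v}" using v by (auto intro!: exI[of _ v])
    fix y assume "y \<in> {l. \<exists>v. v \<noteq> 0 \<and> B *v v = l *\<^sub>R v}"
    then obtain w where w: "w \<noteq> 0" "B *v w = y *\<^sub>R w" by blast
    have "\<mu> * (norm w)\<^sup>2 \<le> y * (norm w)\<^sup>2"
      using low[of w] w by (simp add: power2_norm_eq_inner)
    then show "\<mu> \<le> y" using w by simp
  qed
  then show "lambda1 B * (norm w)\<^sup>2 \<le> w \<bullet> (B *v w)" using low by simp
  show "\<exists>v. norm v = 1 \<and> v \<bullet> (B *v v) = lambda1 B"
    using v \<open>lambda1 B = \<mu>\<close> by (auto simp: power2_norm_eq_inner[symmetric])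
qed

lemma continuous_on_det: "continuous_on S (det :: real^'n^'n \<Rightarrow> real)"
  unfolding det_def by (intro continuous_intros)

lemma continuous_on_quadratic_form: "continuous_on S (\<lambda>B::real^'n^'n. v \<bullet> (B *v v))"
  unfolding matrix_vector_mult_def inner_vec_def by (intro continuous_intros)

lemma det_neq_0_if_pos_definite:
  fixes M :: "real^'n^'n"
  assumes "\<And>v. v \<noteq> 0 \<Longrightarrow> 0 < v \<bullet> (M *v v)"
  shows "det M \<noteq> 0"
proof -
  have "inj ((*v) M)"
  proof (rule injI)
    fix x y assume "M *v x = M *v y"
    then have "M *v (x - y) = 0" by (simp add: matrix_vector_mult_diff_distrib)
    then show "x = y" using assms[of "x - y"] by fastforce
  qed
  then show ?thesis using det_nz_iff_inj[of "(*v) M"] by (simp add: matrix_of_matrix_vector_mul)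
qed

text \<open>The segment from the identity to \<open>M\<close> stays positive definite, so \<open>det\<close> cannot change sign.\<close>

lemma det_pos_if_pos_definite:
  fixes M :: "real^'n^'n"
  assumes pd: "\<And>v. v \<noteq> 0 \<Longrightarrow> 0 < v \<bullet> (M *v v)"
  shows "0 < det M"
proof (rule ccontr)
  assume "\<not> 0 < det M"
  define h where "h s = det ((1 - s) *\<^sub>R mat 1 + s *\<^sub>R M)" for s :: real
  have "continuous_on {0..1} h" unfolding h_def
    by (rule continuous_on_compose2[OF continuous_on_det[of UNIV]]) (auto intro!: continuous_intros)
  moreover have "h 1 \<le> 0" "0 \<le> h 0" using \<open>\<not> 0 < det M\<close> by (auto simp: h_def)
  ultimately obtain s where s: "0 \<le> s" "s \<le> 1" "h s = 0"
    using IVT2'[of h 1 0 0] by auto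
  have "h s \<noteq> 0" unfolding h_def
  proof (rule det_neq_0_if_pos_definite)
    fix v :: "real^'n" assume "v \<noteq> 0"
    have "v \<bullet> (((1 - s) *\<^sub>R mat 1 + s *\<^sub>R M) *v v) = (1 - s) * (v \<bullet> v) + s * (v \<bullet> (M *v v))"
      by (simp add: matrix_vector_mult_add_rdistrib scaleR_matrix_vector_assoc[symmetric] inner_add_right)
    moreover have "0 < (1 - s) * (v \<bullet> v) + s * (v \<bullet> (M *v v))"
    proof (cases "s = 0")
      case False
      then have "0 < s * (v \<bullet> (M *v v))" using s pd[OF \<open>v \<noteq> 0\<close>] by simp
      moreover have "0 \<le> (1 - s) * (v \<bullet> v)" using s by simp
      ultimately show ?thesis by linarith
    qed (use \<open>v \<noteq> 0\<close> in simp)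
    ultimately show "0 < v \<bullet> (((1 - s) *\<^sub>R mat 1 + s *\<^sub>R M) *v v)" by simp
  qed
  then show False using s by simp
qed

lemma det_nonneg_if_pos_semidefinite:
  fixes A :: "real^'n^'n"
  assumes psd: "\<And>v. 0 \<le> v \<bullet> (A *v v)"
  shows "0 \<le> det A"
proof -
  have "0 < det (A + t *\<^sub>R mat 1)" if "t > 0" for t
  proof (rule det_pos_if_pos_definite)
    fix v :: "real^'n" assume "v \<noteq> 0"
    then have "0 < t * (v \<bullet> v)" using \<open>t > 0\<close> by simp
    then show "0 < v \<bullet> ((A + t *\<^sub>R mat 1) *v v)"
      using psd[of v] by (simp add: matrix_vector_mult_add_rdistrib scaleR_matrix_vector_assoc[symmetric] inner_add_right)
  qed
  moreover have "((\<lambda>t. det (A + t *\<^sub>R mat 1)) \<longlongrightarrow> det (A + 0 *\<^sub>R mat 1)) (at_right 0)"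
    by (intro continuous_on_tendsto_compose[OF continuous_on_det[of UNIV]] tendsto_intros) auto
  ultimately show ?thesis
    by (intro tendsto_lowerbound[of _ _ "at_right 0"])
       (auto simp: eventually_at_right_field intro!: exI[of _ 1] less_imp_le)
qed

lemma det_nonneg_if_lambda1_nonneg:
  fixes A :: "real^'n^'n"
  assumes "symmetric_mat A" "0 \<le> lambda1 A"
  shows "0 \<le> det A"
  using assms lambda1_le_quadratic_form[OF assms(1)]
  by (intro det_nonneg_if_pos_semidefinite) (meson mult_nonneg_nonneg order_trans zero_le_power2)

lemma lsc_on_eventually_gt:
  assumes "lsc_on S f" "x \<in> S" "(y \<longlongrightarrow> x) F" "eventually (\<lambda>z. y z \<in> S) F" "c < f x"
  shows "eventually (\<lambda>z. c < f (y z)) F"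
proof -
  obtain e where "e > 0" and e: "\<And>w. w \<in> S \<Longrightarrow> dist w x < e \<Longrightarrow> c < f w"
    using assms(1,2,5) unfolding lsc_on_def by blast
  show ?thesis
    using tendstoD[OF assms(3) \<open>e > 0\<close>] assms(4) by eventually_elim (rule e)
qed

lemma usc_on_eventually_lt:
  assumes "usc_on S f" "x \<in> S" "(y \<longlongrightarrow> x) F" "eventually (\<lambda>z. y z \<in> S) F" "f x < c"
  shows "eventually (\<lambda>z. f (y z) < c) F"
proof -
  obtain e where "e > 0" and e: "\<And>w. w \<in> S \<Longrightarrow> dist w x < e \<Longrightarrow> f w < c"
    using assms(1,2,5) unfolding usc_on_def by blast
  show ?thesis
    using tendstoD[OF assms(3) \<open>e > 0\<close>] assms(4) by eventually_elim (rule e)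
qed

lemma eventually_mult_lt:
  fixes u v :: "'a \<Rightarrow> real" and a b c :: real
  assumes "a * b < c" "0 \<le> a" "0 \<le> b"
    and u: "\<And>a'. a < a' \<Longrightarrow> eventually (\<lambda>z. u z < a') F"
    and v: "\<And>b'. b < b' \<Longrightarrow> eventually (\<lambda>z. v z < b') F"
    and "eventually (\<lambda>z. 0 \<le> u z) F"
  shows "eventually (\<lambda>z. u z * v z < c) F"
proof -
  have "((\<lambda>t. (a + t) * (b + t)) \<longlongrightarrow> (a + 0) * (b + 0)) (at_right 0)"
    by (intro tendsto_intros)
  then have "eventually (\<lambda>t. (a + t) * (b + t) < c) (at_right 0)"
    using assms(1) by (intro order_tendstoD(2)) auto
  with eventually_at_right_less have ev_t: "eventually (\<lambda>t. 0 < t \<and> (a + t) * (b + t) < c) (at_right 0)"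
    by eventually_elim simp
  obtain t where t: "0 < t" "(a + t) * (b + t) < c"
    using eventually_happens[OF ev_t] by auto
  have "eventually (\<lambda>z. u z < a + t) F" "eventually (\<lambda>z. v z < b + t) F"
    using t(1) by (simp_all add: u v)
  with assms(6) show ?thesis
  proof eventually_elim
    case (elim z)
    have "u z * v z \<le> (a + t) * (b + t)"
    proof (cases "0 \<le> v z")
      case True
      then have "u z * v z \<le> (a + t) * v z" using elim by (intro mult_right_mono) auto
      also have "\<dots> \<le> (a + t) * (b + t)" using elim assms(2) t by (intro mult_left_mono) auto
      finally show ?thesis .
    next
      case False
      then have "u z * v z \<le> 0" using elim by (simp add: mult_nonneg_nonpos)
      also have "0 \<le> (a + t) * (b + t)" using assms(2,3) t by simp
      finally show ?thesis .
    qed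
    with t show ?case by linarith
  qed
qed

lemma ereal_le_Liminf_if_eventually_gt:
  fixes h :: "'a \<Rightarrow> real"
  assumes "\<And>c. c < a \<Longrightarrow> eventually (\<lambda>z. c < h z) F"
  shows "ereal a \<le> Liminf F (\<lambda>z. ereal (h z))"
  unfolding le_Liminf_iff
proof (intro allI impI)
  fix y assume "y < ereal a"
  then obtain c where "y < ereal c" "c < a"
    using ereal_dense2 by fastforce
  show "eventually (\<lambda>z. y < ereal (h z)) F"
    using assms[OF \<open>c < a\<close>] by eventually_elim (meson \<open>y < ereal c\<close> less_ereal.simps(1) order.strict_trans)
qed

lemma eventually_neg_lambda1_gt:
  fixes M :: "'a \<Rightarrow> real^'n^'n"
  assumes "(M \<longlongrightarrow> A) F" "eventually (\<lambda>z. symmetric_mat (M z)) F" "symmetric_mat A"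
    and "c < - lambda1 A"
  shows "eventually (\<lambda>z. c < - lambda1 (M z)) F"
proof -
  obtain v where v: "norm v = 1" "v \<bullet> (A *v v) = lambda1 A"
    using lambda1_attained[OF assms(3)] by blast
  have "((\<lambda>z. v \<bullet> (M z *v v)) \<longlongrightarrow> v \<bullet> (A *v v)) F"
    by (rule continuous_on_tendsto_compose[OF continuous_on_quadratic_form[of UNIV] assms(1)]) auto
  then have "eventually (\<lambda>z. v \<bullet> (M z *v v) < - c) F"
    using v assms(4) by (intro order_tendstoD(2)) auto
  with assms(2) show ?thesis
    by eventually_elim (use lambda1_le_quadratic_form[of _ v] v in force)
qed

definition jet_filter :: "(real^'n) set \<Rightarrow> real^'n \<Rightarrow> real^'n \<Rightarrow> real^'n^'n
    \<Rightarrow> ((real^'n) \<times> (real^'n) \<times> (real^'n^'n)) filter" where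
  "jet_filter X x p A = inf (nhds (x, p, A)) (principal (X \<times> UNIV \<times> {B. symmetric_mat B}))"

lemma Fop_lower_eq_Liminf:
  "Fop_lower f g H X x p A
    = Liminf (jet_filter X x p A) (\<lambda>z. ereal (Fop f g H (fst z) (fst (snd z)) (snd (snd z))))"
  unfolding Fop_lower_def jet_filter_def
  by (rule arg_cong[where f = "Liminf _"]) (auto simp: fun_eq_iff)

lemma jet_filter_tendsto:
  shows tendsto_fst_jet_filter: "(fst \<longlongrightarrow> x) (jet_filter X x p A)"
    and tendsto_fst_snd_jet_filter: "((\<lambda>z. fst (snd z)) \<longlongrightarrow> p) (jet_filter X x p A)"
    and tendsto_snd_snd_jet_filter: "((\<lambda>z. snd (snd z)) \<longlongrightarrow> A) (jet_filter X x p A)"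
proof -
  have "((\<lambda>z. z) \<longlongrightarrow> (x, p, A)) (jet_filter X x p A)"
    unfolding jet_filter_def by (rule tendsto_mono[OF inf_le1 filterlim_ident])
  from tendsto_fst[OF this] tendsto_fst[OF tendsto_snd[OF this]] tendsto_snd[OF tendsto_snd[OF this]]
  show "(fst \<longlongrightarrow> x) (jet_filter X x p A)"
    and "((\<lambda>z. fst (snd z)) \<longlongrightarrow> p) (jet_filter X x p A)"
    and "((\<lambda>z. snd (snd z)) \<longlongrightarrow> A) (jet_filter X x p A)"
    by simp_all
qed

lemma eventually_jet_filter:
  shows eventually_fst_mem_jet_filter: "eventually (\<lambda>z. fst z \<in> X) (jet_filter X x p A)"
    and eventually_symmetric_jet_filter:
      "eventually (\<lambda>z. symmetric_mat (snd (snd z))) (jet_filter X x p A)"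
  unfolding jet_filter_def eventually_inf_principal by (auto intro: always_eventually)

lemma closed_symmetric_mat: "closed {B::real^'n^'n. symmetric_mat B}"
proof -
  have "continuous_on UNIV (transpose :: real^'n^'n \<Rightarrow> _)"
    unfolding transpose_def by (intro continuous_intros)
  then show ?thesis unfolding symmetric_mat_def
    using closed_Collect_eq[of transpose "\<lambda>B. B"] by (simp add: continuous_on_id)
qed

lemma Fop_lower_not_symmetric:
  assumes "\<not> symmetric_mat A"
  shows "Fop_lower f g H X x p A = \<infinity>"
proof -
  have "eventually (\<lambda>z. snd (snd z) \<in> - {B. symmetric_mat B}) (jet_filter X x p A)"
    using closed_symmetric_mat assms
    by (intro topological_tendstoD[OF tendsto_snd_snd_jet_filter]) auto
  with eventually_symmetric_jet_filter have "eventually (\<lambda>_. False) (jet_filter X x p A)"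
    by eventually_elim auto
  then have "jet_filter X x p A = bot" by (simp add: eventually_False)
  then show ?thesis by (simp add: Fop_lower_eq_Liminf top_ereal_def)
qed

lemma neg_lambda1_le_Fop_lower:
  assumes "symmetric_mat A"
  shows "ereal (- lambda1 A) \<le> Fop_lower f g H X x p A"
  unfolding Fop_lower_eq_Liminf
proof (rule ereal_le_Liminf_if_eventually_gt)
  fix c assume "c < - lambda1 A"
  then have "eventually (\<lambda>z. c < - lambda1 (snd (snd z))) (jet_filter X x p A)"
    by (intro eventually_neg_lambda1_gt[OF tendsto_snd_snd_jet_filter
          eventually_symmetric_jet_filter assms])
  then show "eventually (\<lambda>z. c < Fop f g H (fst z) (fst (snd z)) (snd (snd z))) (jet_filter X x p A)"
    by eventually_elim (auto simp: Fop_def)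
qed

lemma eventually_Monge_Ampere_term_gt:
  assumes f: "lsc_on X f" "x \<in> X" "(y \<longlongrightarrow> x) F" "eventually (\<lambda>z. y z \<in> X) F"
    and g: "usc_on UNIV g" "\<And>q. 0 \<le> g q" "(q \<longlongrightarrow> p) F"
    and M: "(M \<longlongrightarrow> A) F" "0 \<le> det A"
    and "c < - g p * det A + f x"
  shows "eventually (\<lambda>z. c < - g (q z) * det (M z) + f (y z)) F"
proof -
  define e where "e = (- g p * det A + f x - c) / 2"
  have "e > 0" using assms(10) by (simp add: e_def)
  have c: "c = - g p * det A + f x - 2 * e" by (simp add: e_def field_simps)
  have "((\<lambda>z. det (M z)) \<longlongrightarrow> det A) F"
    by (rule continuous_on_tendsto_compose[OF continuous_on_det[of UNIV] M(1)]) auto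
  then have "eventually (\<lambda>z. g (q z) * det (M z) < g p * det A + e) F"
    using \<open>e > 0\<close> g(2) M(2)
    by (intro eventually_mult_lt usc_on_eventually_lt[OF g(1) _ g(3)] order_tendstoD(2)) auto
  moreover have "eventually (\<lambda>z. f x - e < f (y z)) F"
    using \<open>e > 0\<close> by (intro lsc_on_eventually_gt[OF f]) simp
  ultimately show ?thesis
    by eventually_elim (use c in simp)
qed

lemma eventually_Fop_gt:
  assumes f: "lsc_on X f" "x \<in> X" "(y \<longlongrightarrow> x) F" "eventually (\<lambda>z. y z \<in> X) F"
    and g: "usc_on UNIV g" "\<And>q. 0 \<le> g q" "(q \<longlongrightarrow> p) F"
    and H: "continuous_on UNIV H"
    and M: "(M \<longlongrightarrow> A) F" "eventually (\<lambda>z. symmetric_mat (M z)) F" "symmetric_mat A" "0 \<le> det A"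
    and "c < Fop f g H x p A"
  shows "eventually (\<lambda>z. c < Fop f g H (y z) (q z) (M z)) F"
proof -
  from \<open>c < Fop f g H x p A\<close> consider
    "c < - g p * det A + f x" | "c < - lambda1 A" | "c < H p"
    unfolding Fop_def less_max_iff_disj by blast
  then show ?thesis
  proof cases
    case 1
    with f g M(1,4) have "eventually (\<lambda>z. c < - g (q z) * det (M z) + f (y z)) F"
      by (rule eventually_Monge_Ampere_term_gt)
    then show ?thesis by (rule eventually_mono) (simp add: Fop_def)
  next
    case 2
    with M(1-3) have "eventually (\<lambda>z. c < - lambda1 (M z)) F"
      by (rule eventually_neg_lambda1_gt)
    then show ?thesis by (rule eventually_mono) (simp add: Fop_def)
  next
    case 3
    have "((\<lambda>z. H (q z)) \<longlongrightarrow> H p) F"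
      by (rule continuous_on_tendsto_compose[OF H g(3)]) auto
    then have "eventually (\<lambda>z. c < H (q z)) F"
      using 3 by (rule order_tendstoD(1))
    then show ?thesis by (rule eventually_mono) (simp add: Fop_def)
  qed
qed

lemma Fop_le_Fop_lower:
  assumes "lsc_on X f" "x \<in> X" "usc_on UNIV g" "\<And>q. 0 \<le> g q" "continuous_on UNIV H"
    and "0 \<le> det A"
  shows "ereal (Fop f g H x p A) \<le> Fop_lower f g H X x p A"
proof (cases "symmetric_mat A")
  case True
  show ?thesis
    unfolding Fop_lower_eq_Liminf
    using assms True
    by (intro ereal_le_Liminf_if_eventually_gt eventually_Fop_gt[OF _ _ tendsto_fst_jet_filter
          eventually_fst_mem_jet_filter _ _ tendsto_fst_snd_jet_filter _ tendsto_snd_snd_jet_filter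
          eventually_symmetric_jet_filter])
qed (simp add: Fop_lower_not_symmetric)

theorem mainTheorem2:
  fixes X Y :: "(real^'n) set" and f g H u \<phi> :: "real^'n \<Rightarrow> real" and x :: "real^'n"
  assumes H1: "convex X" "bounded X" "open X" "convex Y" "bounded Y" "open Y"
    and H2: "set_integrable lebesgue X f" "\<forall>z\<in>X. 0 \<le> f z" "lsc_on X f"
    and H3: "integrable lebesgue g" "\<forall>y\<in>Y. 0 < g y" "\<forall>y. y \<notin> Y \<longrightarrow> g y = 0" "usc_on UNIV g"
    and H4: "(LINT z:X|lebesgue. f z) = (LINT y:Y|lebesgue. g y)"
    and hH: "defining_function Y H"
    and hu: "viscosity_subsolution f g H X u"
    and hphi: "C2 \<phi>"
    and hx: "x \<in> X"
    and hmax: "strict_local_max_at X (\<lambda>y. u y - \<phi> y) x"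
  shows "Fop f g H x (grad \<phi> x) (hess \<phi> x) \<le> 0"
proof -
  let ?p = "grad \<phi> x" and ?A = "hess \<phi> x"
  have "local_max_at X (\<lambda>y. u y - \<phi> y) x"
    using hmax unfolding strict_local_max_at_def local_max_at_def by (metis less_imp_le order_refl)
  then have lower: "Fop_lower f g H X x ?p ?A \<le> 0"
    using hu hphi hx unfolding viscosity_subsolution_def by blast
  then have sym: "symmetric_mat ?A"
    using Fop_lower_not_symmetric by fastforce
  have "ereal (- lambda1 ?A) \<le> 0"
    using neg_lambda1_le_Fop_lower[OF sym] lower by (rule order_trans)
  then have "0 \<le> lambda1 ?A" by simp
  then have "0 \<le> det ?A" by (rule det_nonneg_if_lambda1_nonneg[OF sym])
  moreover have "\<And>q. 0 \<le> g q" using H3(2,3) by (metis less_eq_real_def)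
  moreover have "continuous_on UNIV H" using hH by (simp add: defining_function_def)
  ultimately have "ereal (Fop f g H x ?p ?A) \<le> Fop_lower f g H X x ?p ?A"
    using H2(3) hx H3(4) by (intro Fop_le_Fop_lower)
  then have "ereal (Fop f g H x ?p ?A) \<le> 0" using lower by (rule order_trans)
  then show ?thesis by simp
qed

end
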